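(* Let $G'$ be an identifiable graph, $v$ a vertex of $G'$ and $S$ a $\Delta$-star with $\Delta\ge 3$, and let $G=G'\rhd_v S$. Then $G$ is identifiable and $\gamma^{\rm ID}(G) \le \gamma^{\rm ID}(G') + \Delta - 1$.
   Context: A graph is identifiable if it has no two distinct vertices with the same closed neighborhood $N[\cdot]$. An identifying code of $G$ is a set $C\subseteq V(G)$ such that every vertex $v$ has $N[v]\cap C\neq\emptyset$ and for all distinct $u,v$, $N[u]\cap C \ne N[v]\cap C$; $\gamma^{\rm ID}(G)$ is its minimum size. A $\Delta$-star is $K_{1,\Delta}$. For a graph $G'$, a vertex $v$ of $G'$ and a star $S$, $G'\rhd_v S$ is the graph obtained from the disjoint union of $G'$ and $S$ by identifying $v$ with a leaf of $S$. *)

theory Defs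
  imports Main
begin

type_synonym 'a graph = "'a set \<times> ('a \<Rightarrow> 'a \<Rightarrow> bool)"

definition verts :: "'a graph \<Rightarrow> 'a set" where "verts G = fst G"
definition adj :: "'a graph \<Rightarrow> 'a \<Rightarrow> 'a \<Rightarrow> bool" where "adj G = snd G"

definition simple_graph :: "'a graph \<Rightarrow> bool" where
  "simple_graph G \<longleftrightarrow> finite (verts G)
     \<and> (\<forall>x y. adj G x y \<longrightarrow> x \<in> verts G \<and> y \<in> verts G)
     \<and> (\<forall>x y. adj G x y \<longrightarrow> adj G y x)
     \<and> (\<forall>x. \<not> adj G x x)"

definition cnbhd :: "'a graph \<Rightarrow> 'a \<Rightarrow> 'a set" where
  "cnbhd G x = {y \<in> verts G. y = x \<or> adj G x y}"

definition identifiable :: "'a graph \<Rightarrow> bool" where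
  "identifiable G \<longleftrightarrow> (\<forall>u\<in>verts G. \<forall>w\<in>verts G. u \<noteq> w \<longrightarrow> cnbhd G u \<noteq> cnbhd G w)"

definition is_id_code :: "'a graph \<Rightarrow> 'a set \<Rightarrow> bool" where
  "is_id_code G C \<longleftrightarrow> C \<subseteq> verts G
     \<and> (\<forall>x\<in>verts G. cnbhd G x \<inter> C \<noteq> {})
     \<and> (\<forall>u\<in>verts G. \<forall>w\<in>verts G. u \<noteq> w \<longrightarrow> cnbhd G u \<inter> C \<noteq> cnbhd G w \<inter> C)"

definition gamma_ID :: "'a graph \<Rightarrow> nat" where
  "gamma_ID G = (LEAST k. \<exists>C. is_id_code G C \<and> card C = k)"

definition is_star :: "'b graph \<Rightarrow> nat \<Rightarrow> 'b \<Rightarrow> bool" where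
  "is_star S D c \<longleftrightarrow> simple_graph S \<and> c \<in> verts S \<and> card (verts S) = D + 1
     \<and> (\<forall>x y. adj S x y \<longleftrightarrow> (x = c \<and> y \<in> verts S - {c}) \<or> (y = c \<and> x \<in> verts S - {c}))"

text \<open>G' \<rhd>_v S: disjoint union of G' and S (on the sum type), where the leaf l of S
  is identified with the vertex v of G'.\<close>
definition glue_map :: "'a \<Rightarrow> 'b \<Rightarrow> 'b \<Rightarrow> 'a + 'b" where
  "glue_map v l x = (if x = l then Inl v else Inr x)"

definition glue :: "'a graph \<Rightarrow> 'a \<Rightarrow> 'b graph \<Rightarrow> 'b \<Rightarrow> ('a + 'b) graph" where
  "glue G v S l =
    (Inl ` verts G \<union> Inr ` (verts S - {l}),
     \<lambda>p q. (\<exists>a b. p = Inl a \<and> q = Inl b \<and> adj G a b)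
          \<or> (\<exists>x y. adj S x y \<and> p = glue_map v l x \<and> q = glue_map v l y))"

end

theory Submission
  imports Defs
begin

text \<open>Extend an optimal identifying code C' of G' by the D - 1 leaves of the star other than the
  glued one. Every vertex of G' keeps its trace (only v gains the centre, which is not in the code),
  each remaining leaf is identified by itself alone, and the centre is the only vertex whose trace
  contains at least two leaves, which needs D \<ge> 3. So G has an identifying code of size
  \<gamma>(G') + D - 1, and a graph with an identifying code is identifiable.\<close>

lemma identifiable_if_id_code: "is_id_code G C \<Longrightarrow> identifiable G"
  unfolding is_id_code_def identifiable_def by blast

lemma id_code_verts_if_identifiable: "identifiable G \<Longrightarrow> is_id_code G (verts G)"
  by (auto simp: is_id_code_def identifiable_def cnbhd_def)

lemma gamma_ID_le_card: "is_id_code G C \<Longrightarrow> gamma_ID G \<le> card C"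
  unfolding gamma_ID_def by (rule Least_le) blast

lemma optimal_id_code_exists:
  assumes "is_id_code G C\<^sub>0"
  obtains C where "is_id_code G C" "card C = gamma_ID G"
proof -
  from assms have "\<exists>k C. is_id_code G C \<and> card C = k" by blast
  then have "\<exists>C. is_id_code G C \<and> card C = gamma_ID G"
    unfolding gamma_ID_def by (rule LeastI_ex)
  with that show thesis by blast
qed

lemma verts_glue: "verts (glue G v S l) = Inl ` verts G \<union> Inr ` (verts S - {l})"
  by (simp add: verts_def glue_def)

lemma adj_glue: "adj (glue G v S l) p q \<longleftrightarrow>
    (\<exists>a b. p = Inl a \<and> q = Inl b \<and> adj G a b)
  \<or> (\<exists>x y. adj S x y \<and> p = glue_map v l x \<and> q = glue_map v l y)"
  by (simp add: adj_def glue_def)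

locale star_glue =
  fixes G :: "'a graph" and v :: 'a and S :: "'b graph" and D :: nat and c l :: 'b
  assumes v_in_G: "v \<in> verts G" and star: "is_star S D c"
    and leaf_in_S: "l \<in> verts S" and leaf_ne_centre: "l \<noteq> c"
begin

abbreviation H :: "('a + 'b) graph" where "H \<equiv> glue G v S l"

definition other_leaves :: "'b set" where "other_leaves = verts S - {c, l}"

lemma adj_star: "adj S x y \<longleftrightarrow> (x = c \<and> y \<in> verts S - {c}) \<or> (y = c \<and> x \<in> verts S - {c})"
  using star by (simp add: is_star_def)

lemma centre_in_S: "c \<in> verts S"
  using star by (simp add: is_star_def)

lemma finite_verts_star: "finite (verts S)"
  using star by (simp add: is_star_def simple_graph_def)

lemma card_verts_star: "card (verts S) = D + 1"
  using star by (simp add: is_star_def)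

lemma finite_other_leaves: "finite other_leaves"
  using finite_verts_star by (simp add: other_leaves_def)

lemma card_other_leaves: "card other_leaves = D - 1"
  using finite_verts_star card_verts_star centre_in_S leaf_in_S leaf_ne_centre
  by (simp add: other_leaves_def card_Diff_subset)

lemma verts_H: "verts H = Inl ` verts G \<union> Inr ` other_leaves \<union> {Inr c}"
  using centre_in_S leaf_ne_centre by (auto simp: verts_glue other_leaves_def)

lemma adj_H_Inl_Inl: "adj H (Inl a) (Inl b) \<longleftrightarrow> adj G a b"
  by (auto simp: adj_glue glue_map_def adj_star split: if_splits)

lemma adj_H_Inl_Inr: "adj H (Inl a) (Inr y) \<longleftrightarrow> a = v \<and> y = c"
  using leaf_in_S leaf_ne_centre by (auto simp: adj_glue glue_map_def adj_star split: if_splits)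

lemma adj_H_Inr_Inr: "adj H (Inr x) (Inr y) \<longleftrightarrow> x \<noteq> l \<and> y \<noteq> l \<and> adj S x y"
  by (auto simp: adj_glue glue_map_def split: if_splits)

lemma adj_H_Inr_Inl: "adj H (Inr x) (Inl b) \<longleftrightarrow> x = c \<and> b = v"
  using leaf_in_S leaf_ne_centre by (auto simp: adj_glue glue_map_def adj_star split: if_splits)

lemma cnbhd_H_Inl:
  "u \<in> verts G \<Longrightarrow> cnbhd H (Inl u) = Inl ` cnbhd G u \<union> (if u = v then {Inr c} else {})"
  using centre_in_S leaf_ne_centre by (auto simp: cnbhd_def verts_glue adj_H_Inl_Inl adj_H_Inl_Inr)

lemma cnbhd_H_leaf: "x \<in> other_leaves \<Longrightarrow> cnbhd H (Inr x) = {Inr x, Inr c}"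
  using centre_in_S leaf_ne_centre
  by (auto simp: cnbhd_def verts_glue adj_H_Inr_Inl adj_H_Inr_Inr adj_star other_leaves_def)

lemma cnbhd_H_centre: "cnbhd H (Inr c) = {Inr c, Inl v} \<union> Inr ` other_leaves"
  using centre_in_S leaf_ne_centre v_in_G
  by (auto simp: cnbhd_def verts_glue adj_H_Inr_Inl adj_H_Inr_Inr adj_star other_leaves_def)

lemma verts_H_cases:
  assumes "p \<in> verts H"
  obtains (vertex) u where "p = Inl u" "u \<in> verts G"
    | (leaf) x where "p = Inr x" "x \<in> other_leaves"
    | (centre) "p = Inr c"
  using assms unfolding verts_H by blast

definition extended_code :: "'a set \<Rightarrow> ('a + 'b) set" where
  "extended_code C' = Inl ` C' \<union> Inr ` other_leaves"

lemma trace_vertex: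
  "u \<in> verts G \<Longrightarrow> cnbhd H (Inl u) \<inter> extended_code C' = Inl ` (cnbhd G u \<inter> C')"
  by (auto simp: cnbhd_H_Inl extended_code_def other_leaves_def)

lemma trace_leaf: "x \<in> other_leaves \<Longrightarrow> cnbhd H (Inr x) \<inter> extended_code C' = {Inr x}"
  by (auto simp: cnbhd_H_leaf extended_code_def other_leaves_def)

lemma trace_centre:
  "cnbhd H (Inr c) \<inter> extended_code C' = Inl ` ({v} \<inter> C') \<union> Inr ` other_leaves"
  by (auto simp: cnbhd_H_centre extended_code_def other_leaves_def)

lemma two_other_leaves:
  assumes "D \<ge> 3"
  obtains a b where "a \<in> other_leaves" "b \<in> other_leaves" "a \<noteq> b"
proof -
  have "2 \<le> card other_leaves"
    using card_other_leaves assms by simp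
  then show thesis
    using that by (metis obtain_subset_with_card_n card_2_iff insert_subset)
qed

lemma leaves_in_trace:
  "u \<in> verts G \<Longrightarrow> Inr -` (cnbhd H (Inl u) \<inter> extended_code C') = {}"
  "x \<in> other_leaves \<Longrightarrow> Inr -` (cnbhd H (Inr x) \<inter> extended_code C') = {x}"
  "Inr -` (cnbhd H (Inr c) \<inter> extended_code C') = other_leaves"
  by (auto simp: trace_vertex trace_leaf trace_centre)

lemma extended_code_separates:
  assumes code: "is_id_code G C'" and "D \<ge> 3" and "p \<in> verts H" "q \<in> verts H"
    and same_trace: "cnbhd H p \<inter> extended_code C' = cnbhd H q \<inter> extended_code C'"
  shows "p = q"
proof -
  obtain a b where ab: "a \<in> other_leaves" "b \<in> other_leaves" "a \<noteq> b"
    using two_other_leaves \<open>D \<ge> 3\<close> by blast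
  then have not_single: "other_leaves \<noteq> {x}" for x
    by auto
  have same_leaves: "Inr -` (cnbhd H p \<inter> extended_code C') = Inr -` (cnbhd H q \<inter> extended_code C')"
    using same_trace by simp
  from \<open>p \<in> verts H\<close> show ?thesis
  proof (cases rule: verts_H_cases)
    case (vertex u)
    from \<open>q \<in> verts H\<close> show ?thesis
    proof (cases rule: verts_H_cases)
      case (vertex w)
      with \<open>p = Inl u\<close> \<open>u \<in> verts G\<close> same_trace have "cnbhd G u \<inter> C' = cnbhd G w \<inter> C'"
        by (simp add: trace_vertex inj_image_eq_iff)
      with \<open>p = Inl u\<close> \<open>u \<in> verts G\<close> vertex code show ?thesis
        by (auto simp: is_id_code_def)
    qed (use same_leaves vertex leaves_in_trace ab in auto)
  next
    case (leaf x)
    from \<open>q \<in> verts H\<close> show ?thesis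
      by (cases rule: verts_H_cases)
        (use same_leaves leaf leaves_in_trace not_single[symmetric] in auto)
  next
    case centre
    from \<open>q \<in> verts H\<close> show ?thesis
      by (cases rule: verts_H_cases) (use same_leaves centre leaves_in_trace not_single ab in auto)
  qed
qed

lemma extended_code_nonempty:
  assumes "is_id_code G C'" and "D \<ge> 3" and "p \<in> verts H"
  shows "cnbhd H p \<inter> extended_code C' \<noteq> {}"
  using \<open>p \<in> verts H\<close>
proof (cases rule: verts_H_cases)
  case centre
  then show ?thesis
    using two_other_leaves[OF \<open>D \<ge> 3\<close>] leaves_in_trace(3) by blast
qed (use assms(1) in \<open>auto simp: trace_vertex trace_leaf is_id_code_def\<close>)

lemma id_code_extended_code:
  assumes "is_id_code G C'" and "D \<ge> 3"
  shows "is_id_code H (extended_code C')"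
proof -
  have "extended_code C' \<subseteq> verts H"
    using assms(1) by (auto simp: is_id_code_def extended_code_def verts_H)
  with extended_code_nonempty[OF assms] extended_code_separates[OF assms] show ?thesis
    unfolding is_id_code_def by blast
qed

end

theorem mainTheorem4:
  fixes G :: "'a graph" and v :: 'a and S :: "'b graph" and D :: nat and c l :: 'b
  assumes "simple_graph G" and "identifiable G" and "v \<in> verts G"
    and "D \<ge> 3" and "is_star S D c" and "l \<in> verts S" and "l \<noteq> c"
  shows "identifiable (glue G v S l) \<and> gamma_ID (glue G v S l) \<le> gamma_ID G + D - 1"
proof -
  interpret star_glue G v S D c l
    using assms by unfold_locales
  obtain C' where C': "is_id_code G C'" "card C' = gamma_ID G"
    using optimal_id_code_exists id_code_verts_if_identifiable[OF assms(2)] by blast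
  have code: "is_id_code H (extended_code C')"
    using id_code_extended_code C'(1) assms(4) .
  have "finite C'"
    using C'(1) assms(1) finite_subset by (auto simp: is_id_code_def simple_graph_def)
  then have "card (extended_code C') = card C' + card other_leaves"
    using finite_other_leaves unfolding extended_code_def
    by (subst card_Un_disjoint) (auto simp: card_image)
  then show ?thesis
    using identifiable_if_id_code[OF code] gamma_ID_le_card[OF code] C'(2) card_other_leaves
      assms(4) by simp
qed

end
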